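(* Let $D$ be a digraph with at least two vertices and $s\in V(D)$ such that every vertex of $D$ is reachable from $s$, let $(\hat T,\{B_x\}_{x\in V(\hat T)})$ be the $s$-rooted cut decomposition of $D$, and let $\hat P=x_1x_2\dots x_\ell$ be a degenerate path of $\hat T$. Then: (1) every out-branching of $D$ rooted at $s$ contains all arcs $x_ix_{i+1}$, $1\le i<\ell$ (in particular these are arcs of $D$); (2) every arc $x_jx_i$ of $D$ with $j>i$ belongs to no out-branching of $D$ rooted at $s$; (3) for every $1\le i<\ell$, the only arc of $D$ from $x_i$ to a vertex of $B_y$, where $y=x_i$ or $y$ is a descendant of $x_i$ in $\hat T$, is the arc $x_ix_{i+1}$.
   Context: Digraphs are finite and without loops; paths are directed. An out-tree is an oriented tree with exactly one vertex of in-degree zero (its root); an out-branching of $D$ is a spanning out-tree of $D$. A vertex $v$ is bi-reachable from $r$ if there are two internally vertex-disjoint directed paths from $r$ to $v$. For a digraph $H$ with at least two vertices and $r\in V(H)$ such that every vertex of $H$ is reachable from $r$, the diblock $B_r$ of $r$ in $H$ is the set of all vertices bi-reachable from $r$, together with $r$ and all out-neighbours of $r$. For $x\in B_r\setminus\{r\}$ let $X_x$ be the set of vertices $v\in V(H)\setminus B_r$ such that every directed $r$–$v$ path intersects $B_r$ for the last time in $x$; $x$ is a bottleneck of $B_r$ if $X_x\ne\emptyset$ (the sets $X_x$ partition $V(H)\setminus B_r$). The $r$-rooted cut decomposition $(\hat T,\{B_x\}_{x\in V(\hat T)})$ of $H$ is defined recursively: $\hat T$ is a rooted tree with root $r$ and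 $V(\hat T)\subseteq V(H)$; the set associated with the root is $B_r$; the children of $r$ are the bottlenecks of $B_r$; and for each bottleneck $x$, the subtree of $\hat T$ rooted at $x$ together with its associated sets is the $x$-rooted cut decomposition of the induced subgraph $H[X_x\cup\{x\}]$. A set $B_x$ is degenerate if $x$ is an internal (non-leaf) node of $\hat T$ and $|B_x|=2$. A path $x_1\dots x_\ell$ in $\hat T$ is monotone if it is a subpath of a path from the root of $\hat T$ to a leaf, with $x_{i+1}$ a child of $x_i$; it is degenerate if it is monotone and $B_{x_i}$ is degenerate for every $i$. *)

theory Defs
  imports Main
begin

text \<open>A digraph is given by a vertex set V and an arc set A of ordered pairs.
  Subgraphs induced by W are handled by restricting all vertices of paths to W.\<close>

definition digraph :: "'a set \<Rightarrow> ('a \<times> 'a) set \<Rightarrow> bool" where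
  "digraph V A \<longleftrightarrow> finite V \<and> A \<subseteq> V \<times> V \<and> (\<forall>v. (v, v) \<notin> A)"

definition dipath :: "'a set \<Rightarrow> ('a \<times> 'a) set \<Rightarrow> 'a list \<Rightarrow> bool" where
  "dipath W A p \<longleftrightarrow> p \<noteq> [] \<and> distinct p \<and> set p \<subseteq> W \<and>
     (\<forall>i. Suc i < length p \<longrightarrow> (p ! i, p ! Suc i) \<in> A)"

definition bireachable :: "'a set \<Rightarrow> ('a \<times> 'a) set \<Rightarrow> 'a \<Rightarrow> 'a \<Rightarrow> bool" where
  "bireachable W A r v \<longleftrightarrow> (\<exists>p q. dipath W A p \<and> dipath W A q \<and> p \<noteq> q \<and>
     hd p = r \<and> last p = v \<and> hd q = r \<and> last q = v \<and>
     (set p - {r, v}) \<inter> (set q - {r, v}) = {})"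

definition diblock :: "'a set \<Rightarrow> ('a \<times> 'a) set \<Rightarrow> 'a \<Rightarrow> 'a set" where
  "diblock W A r = {r} \<union> {v \<in> W. (r, v) \<in> A} \<union> {v \<in> W. bireachable W A r v}"

definition Xset :: "'a set \<Rightarrow> ('a \<times> 'a) set \<Rightarrow> 'a \<Rightarrow> 'a \<Rightarrow> 'a set" where
  "Xset W A r x = {v \<in> W - diblock W A r. \<forall>p. dipath W A p \<and> hd p = r \<and> last p = v \<longrightarrow>
      (\<exists>k < length p. p ! k = x \<and> (\<forall>j. k < j \<and> j < length p \<longrightarrow> p ! j \<notin> diblock W A r))}"

definition bottlenecks :: "'a set \<Rightarrow> ('a \<times> 'a) set \<Rightarrow> 'a \<Rightarrow> 'a set" where
  "bottlenecks W A r = {x \<in> diblock W A r - {r}. Xset W A r x \<noteq> {}}"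

text \<open>Nodes of the r-rooted cut decomposition of (V,A), each paired with the vertex set
  of the induced subgraph in which it is the root.\<close>
inductive_set cd_nodes :: "'a set \<Rightarrow> ('a \<times> 'a) set \<Rightarrow> 'a \<Rightarrow> ('a set \<times> 'a) set"
  for V A r where
  cd_root: "(V, r) \<in> cd_nodes V A r"
| cd_child: "(W, x) \<in> cd_nodes V A r \<Longrightarrow> y \<in> bottlenecks W A x \<Longrightarrow>
             (Xset W A x y \<union> {y}, y) \<in> cd_nodes V A r"

definition cd_node :: "'a set \<Rightarrow> ('a \<times> 'a) set \<Rightarrow> 'a \<Rightarrow> 'a \<Rightarrow> bool" where
  "cd_node V A r x \<longleftrightarrow> (\<exists>W. (W, x) \<in> cd_nodes V A r)"

definition cd_sub :: "'a set \<Rightarrow> ('a \<times> 'a) set \<Rightarrow> 'a \<Rightarrow> 'a \<Rightarrow> 'a set" where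
  "cd_sub V A r x = (THE W. (W, x) \<in> cd_nodes V A r)"

definition cd_bag :: "'a set \<Rightarrow> ('a \<times> 'a) set \<Rightarrow> 'a \<Rightarrow> 'a \<Rightarrow> 'a set" where
  "cd_bag V A r x = diblock (cd_sub V A r x) A x"

definition cd_children :: "'a set \<Rightarrow> ('a \<times> 'a) set \<Rightarrow> 'a \<Rightarrow> 'a \<Rightarrow> 'a set" where
  "cd_children V A r x = (if cd_node V A r x then bottlenecks (cd_sub V A r x) A x else {})"

definition cd_child_rel :: "'a set \<Rightarrow> ('a \<times> 'a) set \<Rightarrow> 'a \<Rightarrow> ('a \<times> 'a) set" where
  "cd_child_rel V A r = {(x, y). y \<in> cd_children V A r x}"

definition degenerate_node :: "'a set \<Rightarrow> ('a \<times> 'a) set \<Rightarrow> 'a \<Rightarrow> 'a \<Rightarrow> bool" where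
  "degenerate_node V A r x \<longleftrightarrow> cd_node V A r x \<and> cd_children V A r x \<noteq> {} \<and>
     card (cd_bag V A r x) = 2"

definition degenerate_path :: "'a set \<Rightarrow> ('a \<times> 'a) set \<Rightarrow> 'a \<Rightarrow> 'a list \<Rightarrow> bool" where
  "degenerate_path V A r xs \<longleftrightarrow> xs \<noteq> [] \<and>
     (\<forall>i < length xs. degenerate_node V A r (xs ! i)) \<and>
     (\<forall>i. Suc i < length xs \<longrightarrow> xs ! Suc i \<in> cd_children V A r (xs ! i))"

definition out_branching :: "'a set \<Rightarrow> ('a \<times> 'a) set \<Rightarrow> 'a \<Rightarrow> ('a \<times> 'a) set \<Rightarrow> bool" where
  "out_branching V A s F \<longleftrightarrow> F \<subseteq> A \<and> s \<in> V \<and> (\<forall>u. (u, s) \<notin> F) \<and>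
     (\<forall>v \<in> V. v \<noteq> s \<longrightarrow> (\<exists>!u. (u, v) \<in> F)) \<and> (\<forall>v \<in> V. (s, v) \<in> F\<^sup>*)"

end

(* The subgraph at node x of the s-rooted cut decomposition consists exactly of the vertices
   dominated by x, i.e. those v such that every s-v path passes through x (for x = s: all of V).
   If x is degenerate with child c, its diblock {x, c} makes c the only out-neighbour of x among
   the vertices dominated by x, and along a degenerate path every vertex is strictly dominated
   by its predecessors.  Then:
   (1) the path from s to c in an out-branching passes through x and stays among the vertices
       dominated by x from there on, so it leaves x along xc;
   (2) the parent of x_i in an out-branching is reachable from s avoiding x_i, hence is not
       dominated by x_i, whereas x_j is;
   (3) every bag below x_i consists of vertices dominated by x_i. *)

theory Submission
  imports Defs
begin

lemma rtrancl_exit: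
  assumes "(a, b) \<in> R\<^sup>*" "a \<in> S" "b \<notin> S"
  shows "\<exists>p q. (p, q) \<in> R \<and> p \<in> S \<and> q \<notin> S"
  using assms by (induction rule: rtrancl_induct) auto

lemma rtrancl_last_arc:
  assumes "(a, b) \<in> R\<^sup>*" "a \<noteq> b"
  shows "\<exists>u. (a, u) \<in> (Restr R (- {b}))\<^sup>* \<and> (u, b) \<in> R"
proof -
  let ?S = "{u. (a, u) \<in> (Restr R (- {b}))\<^sup>*}"
  have "b \<notin> ?S"
    using assms(2) by (auto elim: rtranclE)
  then obtain p q where pq: "(p, q) \<in> R" "p \<in> ?S" "q \<notin> ?S"
    using rtrancl_exit[OF assms(1)] by blast
  have "p \<noteq> b"
    using pq(2) \<open>b \<notin> ?S\<close> by blast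
  have "q = b"
  proof (rule ccontr)
    assume "q \<noteq> b"
    with pq \<open>p \<noteq> b\<close> have "(a, q) \<in> (Restr R (- {b}))\<^sup>*"
      by (auto intro: rtrancl_into_rtrancl)
    with pq(3) show False by simp
  qed
  with pq show ?thesis by blast
qed

lemma dipath_Cons_Cons:
  "dipath W A (a # b # p) \<longleftrightarrow>
     (a, b) \<in> A \<and> a \<in> W \<and> a \<notin> set (b # p) \<and> dipath W A (b # p)"
proof -
  have "(\<forall>i. Suc i < length (a # b # p) \<longrightarrow> ((a # b # p) ! i, (a # b # p) ! Suc i) \<in> A)
      \<longleftrightarrow> (\<forall>i < Suc (length p). ((a # b # p) ! i, (a # b # p) ! Suc i) \<in> A)"
    by auto
  also have "\<dots> \<longleftrightarrow> (a, b) \<in> A \<and> (\<forall>i < length p. ((b # p) ! i, (b # p) ! Suc i) \<in> A)"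
    by (simp only: All_less_Suc2) simp
  finally show ?thesis
    unfolding dipath_def by auto
qed

lemma dipath_Nil [simp]: "\<not> dipath W A []"
  by (simp add: dipath_def)

lemma dipath_singleton [simp]: "dipath W A [a] \<longleftrightarrow> a \<in> W"
  by (simp add: dipath_def)

lemma dipath_appendD: "dipath W A (ys @ zs) \<Longrightarrow> zs \<noteq> [] \<Longrightarrow> dipath W A zs"
proof (induction ys)
  case (Cons y ys)
  then show ?case
    by (cases "ys @ zs") (auto simp: dipath_Cons_Cons)
qed simp

lemma dipath_imp_rtrancl:
  "dipath W A p \<Longrightarrow> set p \<subseteq> T \<Longrightarrow> (hd p, last p) \<in> (Restr A T)\<^sup>*"
  by (induction p rule: induct_list012)
     (auto simp: dipath_Cons_Cons intro: converse_rtrancl_into_rtrancl)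

lemma rtrancl_imp_dipath:
  assumes "(a, b) \<in> (Restr A S)\<^sup>*" "b \<in> S"
  shows "\<exists>p. dipath S A p \<and> hd p = a \<and> last p = b"
  using assms(1)
proof (induction rule: converse_rtrancl_induct)
  case base
  show ?case
    using assms(2) by (intro exI[of _ "[b]"]) simp
next
  case (step a a')
  then obtain p where p: "dipath S A p" "hd p = a'" "last p = b"
    by blast
  show ?case
  proof (cases "a \<in> set p")
    case True
    then obtain ys zs where "p = ys @ a # zs"
      by (meson split_list)
    with p show ?thesis
      by (intro exI[of _ "a # zs"]) (auto dest: dipath_appendD)
  next
    case False
    have "p = a' # tl p"
      using p by (cases p) auto
    with p step(1) False have "dipath S A (a # p)"
      using dipath_Cons_Cons[of S A a a' "tl p"] by auto
    with p show ?thesis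
      by (intro exI[of _ "a # p"]) auto
  qed
qed

lemma diblock_subset: "diblock W A r \<subseteq> insert r W"
  by (auto simp: diblock_def)

lemma diblock_eq_pair_arcs:
  assumes B: "diblock W A r = {r, c}" and "c \<noteq> r" "(r, r) \<notin> A"
  shows "(r, c) \<in> A" and "\<And>z. z \<in> W \<Longrightarrow> (r, z) \<in> A \<Longrightarrow> z = c"
proof -
  show out: "z = c" if "z \<in> W" "(r, z) \<in> A" for z
  proof -
    have "z \<in> diblock W A r" "z \<noteq> r"
      using that assms(3) by (auto simp: diblock_def)
    with B show ?thesis by simp
  qed
  have "c \<in> diblock W A r"
    using B by simp
  then have "(r, c) \<in> A \<or> bireachable W A r c"
    using \<open>c \<noteq> r\<close> by (auto simp: diblock_def)
  then show "(r, c) \<in> A"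
  proof
    assume "bireachable W A r c"
    then obtain p where p: "dipath W A p" "hd p = r" "last p = c"
      unfolding bireachable_def by blast
    then obtain w q where "p = r # w # q"
      using \<open>c \<noteq> r\<close> by (cases p; cases "tl p") (auto simp: dipath_def)
    with p have "(r, w) \<in> A" "w \<in> W"
      by (auto simp: dipath_Cons_Cons dipath_def)
    with out show "(r, c) \<in> A"
      by blast
  qed
qed

locale rooted_digraph =
  fixes V :: "'a set" and A :: "('a \<times> 'a) set" and s :: 'a
  assumes digraph: "digraph V A"
    and root_in_V: "s \<in> V"
    and reachable_from_root: "\<forall>v \<in> V. (s, v) \<in> A\<^sup>*"
begin

lemma arcs_subset: "A \<subseteq> V \<times> V"
  using digraph by (simp add: digraph_def)

lemma no_loop: "(v, v) \<notin> A"
  using digraph by (simp add: digraph_def)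

definition dominated :: "'a \<Rightarrow> 'a set" where
  "dominated x = {v \<in> V. x = s \<or> (s, v) \<notin> (Restr A (- {x}))\<^sup>*}"

lemma dominated_subset_V: "dominated x \<subseteq> V"
  by (auto simp: dominated_def)

lemma dominated_root [simp]: "dominated s = V"
  by (auto simp: dominated_def)

lemma not_dominatedI: "x \<noteq> s \<Longrightarrow> (s, v) \<in> (Restr A (- {x}))\<^sup>* \<Longrightarrow> v \<notin> dominated x"
  by (simp add: dominated_def)

lemma root_dominated: "s \<in> dominated x \<Longrightarrow> x = s"
  by (auto simp: dominated_def)

lemma dominator_in_V:
  assumes "v \<in> dominated x"
  shows "x \<in> V"
proof (rule ccontr)
  assume "x \<notin> V"
  then have "x \<noteq> s" "Restr A (- {x}) = A"
    using root_in_V arcs_subset by auto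
  with assms reachable_from_root show False
    by (auto simp: dominated_def)
qed

lemma self_dominated: "x \<in> V \<Longrightarrow> x \<in> dominated x"
  by (auto simp: dominated_def elim: rtranclE)

lemma avoiding_dominator_avoids_dominated:
  assumes "y \<in> dominated x" "x \<noteq> s" "(s, w) \<in> (Restr A (- {x}))\<^sup>*"
  shows "(s, w) \<in> (Restr A (- {y}))\<^sup>*"
  using assms(3)
proof (induction rule: rtrancl_induct)
  case (step b c)
  have "(s, c) \<in> (Restr A (- {x}))\<^sup>*"
    using step(1,2) by (rule rtrancl_into_rtrancl)
  then have "b \<notin> dominated x" "c \<notin> dominated x"
    using step(1) assms(2) by (simp_all add: not_dominatedI)
  then have "(b, c) \<in> Restr A (- {y})"
    using step(2) assms(1) by auto
  with step(3) show ?case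
    by (rule rtrancl_into_rtrancl)
qed simp

lemma dominated_trans:
  assumes "y \<in> dominated x" "v \<in> dominated y"
  shows "v \<in> dominated x"
proof (rule ccontr)
  assume "v \<notin> dominated x"
  then have "x \<noteq> s" "(s, v) \<in> (Restr A (- {x}))\<^sup>*"
    using assms(2) dominated_subset_V by (auto simp: dominated_def)
  moreover have "y \<noteq> s"
    using assms(1) \<open>x \<noteq> s\<close> root_dominated by blast
  ultimately show False
    using assms avoiding_dominator_avoids_dominated not_dominatedI by blast
qed

lemma reachable_avoiding_strictly_dominated:
  assumes "y \<in> dominated x" "y \<noteq> x"
  shows "(s, x) \<in> (Restr A (- {y}))\<^sup>*"
proof (cases "x = s")
  case False
  obtain u where u: "(s, u) \<in> (Restr A (- {x}))\<^sup>*" "(u, x) \<in> A"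
    using rtrancl_last_arc[of s x A] reachable_from_root dominator_in_V[OF assms(1)] False
    by auto
  have "u \<notin> dominated x"
    using u(1) False by (rule not_dominatedI[rotated])
  then have "u \<noteq> y"
    using assms(1) by blast
  with u assms avoiding_dominator_avoids_dominated[OF assms(1) False u(1)] show ?thesis
    by (auto intro: rtrancl_into_rtrancl)
qed simp

lemma dominated_antisym:
  assumes "y \<in> dominated x" "x \<in> dominated y"
  shows "x = y"
proof (rule ccontr)
  assume "x \<noteq> y"
  then have "(s, x) \<in> (Restr A (- {y}))\<^sup>*"
    using assms(1) reachable_avoiding_strictly_dominated by metis
  moreover have "y \<noteq> s"
    using assms(1) root_dominated \<open>x \<noteq> y\<close> by blast
  ultimately show False
    using assms(2) not_dominatedI by blast
qed

lemma strictly_dominated_trans: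
  "y \<in> dominated x - {x} \<Longrightarrow> z \<in> dominated y - {y} \<Longrightarrow> z \<in> dominated x - {x}"
  using dominated_trans dominated_antisym by blast

lemma dominator_reaches_within_dominated:
  assumes "E \<subseteq> A" "(s, v) \<in> (Restr E T)\<^sup>*" "v \<in> dominated x"
  shows "(x, v) \<in> (Restr E (T \<inter> dominated x))\<^sup>*"
  using assms(2,3)
proof (induction rule: rtrancl_induct)
  case base
  then show ?case
    using root_dominated by auto
next
  case (step b c)
  have bc: "(b, c) \<in> A" "b \<in> T" "c \<in> T"
    using step(2) assms(1) by auto
  show ?case
  proof (cases "b \<in> dominated x")
    case True
    with step bc show ?thesis
      by (auto intro: rtrancl_into_rtrancl)
  next
    case False
    have "c = x"
    proof (rule ccontr)
      assume "c \<noteq> x"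
      have "x \<noteq> s" "(s, b) \<in> (Restr A (- {x}))\<^sup>*"
        using False bc(1) arcs_subset by (auto simp: dominated_def)
      moreover have "b \<noteq> x"
        using False self_dominated dominator_in_V[OF step(4)] by blast
      moreover have "(b, c) \<in> Restr A (- {x})"
        using bc(1) \<open>c \<noteq> x\<close> \<open>b \<noteq> x\<close> by simp
      ultimately have "(s, c) \<in> (Restr A (- {x}))\<^sup>*"
        by (meson rtrancl_into_rtrancl)
      with \<open>x \<noteq> s\<close> step(4) show False
        by (simp add: not_dominatedI)
    qed
    then show ?thesis by simp
  qed
qed

lemma diblock_reachable_avoiding:
  assumes b: "b \<in> diblock (dominated x) A x" and y: "y \<in> dominated x" "y \<noteq> x" "b \<noteq> y"
  shows "(s, b) \<in> (Restr A (- {y}))\<^sup>*"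
proof -
  have "(x, b) \<in> (Restr A (- {y}))\<^sup>*"
  proof -
    consider "b = x" | "(x, b) \<in> A" | "bireachable (dominated x) A x b"
      using b by (auto simp: diblock_def)
    then show ?thesis
    proof cases
      case 2
      with y have "(x, b) \<in> Restr A (- {y})"
        by simp
      then show ?thesis
        by (rule r_into_rtrancl)
    next
      case 3
      then obtain p q where pq: "dipath (dominated x) A p" "dipath (dominated x) A q"
        "hd p = x" "last p = b" "hd q = x" "last q = b" "(set p - {x, b}) \<inter> (set q - {x, b}) = {}"
        unfolding bireachable_def by blast
      then have "set p \<subseteq> - {y} \<or> set q \<subseteq> - {y}"
        using y by blast
      then show ?thesis
        using dipath_imp_rtrancl pq(1-6) by metis
    qed simp
  qed
  with reachable_avoiding_strictly_dominated[OF y(1,2)] show ?thesis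
    by (rule rtrancl_trans)
qed

lemma Xset_subset_dominated:
  assumes "y \<noteq> x"
  shows "Xset (dominated x) A x y \<subseteq> dominated y"
proof
  fix v assume v: "v \<in> Xset (dominated x) A x y"
  then have vx: "v \<in> dominated x"
    by (simp add: Xset_def)
  show "v \<in> dominated y"
  proof (rule ccontr)
    assume "v \<notin> dominated y"
    moreover have "v \<in> V"
      using vx dominated_subset_V by blast
    ultimately have "v \<noteq> y" "(s, v) \<in> (Restr A (- {y}))\<^sup>*"
      using self_dominated by (auto simp: dominated_def)
    then have "(x, v) \<in> (Restr A (- {y} \<inter> dominated x))\<^sup>*"
      using vx by (intro dominator_reaches_within_dominated) simp_all
    moreover have "v \<in> - {y} \<inter> dominated x"
      using vx \<open>v \<noteq> y\<close> by simp
    ultimately obtain q where q: "dipath (- {y} \<inter> dominated x) A q" "hd q = x" "last q = v"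
      by (blast dest: rtrancl_imp_dipath)
    then have "dipath (dominated x) A q" "y \<notin> set q"
      by (auto simp: dipath_def)
    moreover obtain k where "k < length q" "q ! k = y"
      using v q(2,3) \<open>dipath (dominated x) A q\<close> by (auto simp: Xset_def)
    ultimately show False
      by (metis nth_mem)
  qed
qed

lemma dominated_subset_Xset:
  assumes y: "y \<in> dominated x" "y \<noteq> x"
  shows "dominated y - {y} \<subseteq> Xset (dominated x) A x y"
proof
  fix v assume v: "v \<in> dominated y - {y}"
  have "y \<noteq> s"
    using y root_dominated by blast
  with v have unreachable: "(s, v) \<notin> (Restr A (- {y}))\<^sup>*"
    by (simp add: dominated_def)
  have not_diblock: "w \<notin> diblock (dominated x) A x"
    if w: "w \<noteq> y" "(w, v) \<in> (Restr A (- {y}))\<^sup>*" for w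
  proof
    assume "w \<in> diblock (dominated x) A x"
    from rtrancl_trans[OF diblock_reachable_avoiding[OF this y w(1)] w(2)] unreachable
    show False by contradiction
  qed
  have last_after_y:
    "\<exists>k < length q. q ! k = y \<and> (\<forall>j. k < j \<and> j < length q \<longrightarrow> q ! j \<notin> diblock (dominated x) A x)"
    if q: "dipath (dominated x) A q" "hd q = x" "last q = v" for q
  proof -
    have "y \<in> set q"
    proof (rule ccontr)
      assume "y \<notin> set q"
      then have "set q \<subseteq> - {y}"
        by blast
      from dipath_imp_rtrancl[OF q(1) this] have "(x, v) \<in> (Restr A (- {y}))\<^sup>*"
        using q(2,3) by simp
      from rtrancl_trans[OF reachable_avoiding_strictly_dominated[OF y] this] unreachable
      show False by contradiction
    qed
    then obtain ys zs where q_split: "q = ys @ y # zs"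
      by (meson split_list)
    have "w \<notin> diblock (dominated x) A x" if w: "w \<in> set zs" for w
    proof -
      obtain us ws where "zs = us @ w # ws"
        using split_list[OF w] by blast
      with q_split have q_eq: "q = (ys @ y # us) @ w # ws"
        by simp
      from q(1) have "dipath (dominated x) A (w # ws)"
        unfolding q_eq by (rule dipath_appendD) simp
      moreover have "y \<notin> set (w # ws)"
        using q(1) q_eq by (auto simp: dipath_def)
      moreover have "last (w # ws) = v"
        using q(3) q_eq by simp
      moreover have "set (w # ws) \<subseteq> - {y}"
        using \<open>y \<notin> set (w # ws)\<close> by blast
      ultimately have "(w, v) \<in> (Restr A (- {y}))\<^sup>*"
        using dipath_imp_rtrancl[of _ A "w # ws" "- {y}"] by simp
      with not_diblock \<open>y \<notin> set (w # ws)\<close> show ?thesis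
        by auto
    qed
    moreover have "q ! j \<in> set zs" if j: "length ys < j" "j < length q" for j
    proof -
      obtain k where "j = Suc (length ys + k)"
        using j(1) less_iff_Suc_add by blast
      with j(2) show ?thesis
        by (simp add: q_split nth_append)
    qed
    moreover have "length ys < length q" "q ! length ys = y"
      by (simp_all add: q_split)
    ultimately show ?thesis
      by blast
  qed
  have "v \<notin> diblock (dominated x) A x"
    using not_diblock[of v] v by blast
  moreover have "v \<in> dominated x"
    using dominated_trans y(1) v by blast
  ultimately show "v \<in> Xset (dominated x) A x y"
    using last_after_y unfolding Xset_def by blast
qed

lemma Xset_insert_eq_dominated:
  assumes "y \<in> dominated x" "y \<noteq> x"
  shows "Xset (dominated x) A x y \<union> {y} = dominated y"
proof -
  have "y \<in> dominated y"
    using assms(1) dominated_subset_V self_dominated by blast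
  then show ?thesis
    using Xset_subset_dominated[OF assms(2)] dominated_subset_Xset[OF assms] by blast
qed

lemma cd_nodes_dominated:
  "(W, x) \<in> cd_nodes V A s \<Longrightarrow> x \<in> V \<and> W = dominated x"
proof (induction rule: cd_nodes.induct)
  case cd_root
  show ?case
    using root_in_V by simp
next
  case (cd_child W x y)
  then have W: "W = dominated x"
    by simp
  from cd_child.hyps(2) have "y \<in> diblock W A x" "y \<noteq> x"
    by (simp_all add: bottlenecks_def)
  with diblock_subset[of W A x] W have "y \<in> dominated x"
    by blast
  with \<open>y \<noteq> x\<close> W show ?case
    using Xset_insert_eq_dominated[of y x] dominated_subset_V by blast
qed

lemma cd_node_in_V: "cd_node V A s x \<Longrightarrow> x \<in> V"
  using cd_nodes_dominated by (auto simp: cd_node_def)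

lemma cd_sub_eq_dominated:
  assumes "cd_node V A s x"
  shows "cd_sub V A s x = dominated x"
  unfolding cd_sub_def
proof (rule the_equality)
  show "(dominated x, x) \<in> cd_nodes V A s"
    using assms cd_nodes_dominated by (auto simp: cd_node_def)
qed (use cd_nodes_dominated in blast)

lemma cd_children_eq_bottlenecks:
  "cd_node V A s x \<Longrightarrow> cd_children V A s x = bottlenecks (dominated x) A x"
  by (simp add: cd_children_def cd_sub_eq_dominated)

lemma cd_bag_eq_diblock: "cd_node V A s x \<Longrightarrow> cd_bag V A s x = diblock (dominated x) A x"
  by (simp add: cd_bag_def cd_sub_eq_dominated)

lemma cd_child_node:
  assumes "y \<in> cd_children V A s x"
  shows "cd_node V A s y" "y \<in> dominated x - {x}"
proof -
  have x: "cd_node V A s x"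
    using assms by (auto simp: cd_children_def split: if_splits)
  then have "(dominated x, x) \<in> cd_nodes V A s"
    unfolding cd_node_def using cd_nodes_dominated by blast
  moreover have y: "y \<in> bottlenecks (dominated x) A x"
    using assms cd_children_eq_bottlenecks[OF x] by simp
  ultimately show "cd_node V A s y"
    unfolding cd_node_def by (blast intro: cd_nodes.cd_child)
  show "y \<in> dominated x - {x}"
    using y diblock_subset[of "dominated x" A x] by (auto simp: bottlenecks_def)
qed

lemma cd_descendant_dominated:
  assumes "(x, y) \<in> (cd_child_rel V A s)\<^sup>*" "cd_node V A s x"
  shows "cd_node V A s y \<and> dominated y \<subseteq> dominated x"
  using assms(1)
proof (induction rule: rtrancl_induct)
  case (step y z)
  then have "z \<in> cd_children V A s y"
    by (simp add: cd_child_rel_def)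
  then have "cd_node V A s z" "z \<in> dominated y"
    by (auto dest: cd_child_node)
  with step.IH show ?case
    using dominated_trans[of z y] by blast
qed (simp add: assms(2))

lemma cd_bag_subset_dominated:
  assumes "cd_node V A s x"
  shows "cd_bag V A s x \<subseteq> dominated x"
proof -
  have "x \<in> dominated x"
    using cd_node_in_V[OF assms] by (rule self_dominated)
  then show ?thesis
    using cd_bag_eq_diblock[OF assms] diblock_subset[of "dominated x" A x] by blast
qed

lemma degenerate_node_forced_arc:
  assumes "degenerate_node V A s x"
  obtains c where "cd_children V A s x = {c}" "c \<in> dominated x - {x}" "(x, c) \<in> A"
    "\<And>z. z \<in> dominated x \<Longrightarrow> (x, z) \<in> A \<Longrightarrow> z = c"
proof -
  let ?B = "diblock (dominated x) A x"
  have x: "cd_node V A s x" and "cd_children V A s x \<noteq> {}" and card: "card ?B = 2"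
    using assms cd_bag_eq_diblock by (auto simp: degenerate_node_def)
  then obtain c where c: "c \<in> cd_children V A s x"
    by blast
  then have c_dom: "c \<in> dominated x - {x}"
    by (rule cd_child_node)
  have "c \<in> ?B"
    using c cd_children_eq_bottlenecks[OF x] by (simp add: bottlenecks_def)
  moreover have "x \<in> ?B"
    by (simp add: diblock_def)
  moreover have "finite ?B"
    using card by (intro card_ge_0_finite) simp
  moreover have "card {x, c} = 2"
    using c_dom by auto
  ultimately have B: "?B = {x, c}"
    using card by (intro card_subset_eq[symmetric]) simp_all
  have "cd_children V A s x \<subseteq> ?B - {x}"
    using cd_children_eq_bottlenecks[OF x] by (auto simp: bottlenecks_def)
  with B c have "cd_children V A s x = {c}"
    by blast
  moreover have "(x, c) \<in> A" "\<And>z. z \<in> dominated x \<Longrightarrow> (x, z) \<in> A \<Longrightarrow> z = c"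
    using diblock_eq_pair_arcs[OF B] c_dom no_loop by auto
  ultimately show thesis
    using c_dom that by blast
qed

lemma out_branching_forced_arc:
  assumes F: "out_branching V A s F" and c: "c \<in> dominated x - {x}"
    and unique: "\<And>z. z \<in> dominated x \<Longrightarrow> (x, z) \<in> A \<Longrightarrow> z = c"
  shows "(x, c) \<in> F"
proof -
  have FA: "F \<subseteq> A" and "(s, c) \<in> (Restr F UNIV)\<^sup>*"
    using F c dominated_subset_V[of x] by (auto simp: out_branching_def)
  then have "(x, c) \<in> (Restr F (UNIV \<inter> dominated x))\<^sup>*"
    using c by (intro dominator_reaches_within_dominated) auto
  then obtain w where "(x, w) \<in> F" "w \<in> dominated x"
    using c by (auto elim: converse_rtranclE)
  with FA unique show ?thesis
    by blast
qed

lemma out_branching_no_arc_into_dominator: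
  assumes F: "out_branching V A s F" and u: "u \<in> dominated v" "u \<noteq> v"
  shows "(u, v) \<notin> F"
proof
  assume uv: "(u, v) \<in> F"
  have FA: "F \<subseteq> A" and "v \<noteq> s"
    using F uv by (auto simp: out_branching_def)
  then have v: "v \<in> V" "(s, v) \<in> F\<^sup>*"
    using F uv arcs_subset by (auto simp: out_branching_def)
  then obtain w where w: "(s, w) \<in> (Restr F (- {v}))\<^sup>*" "(w, v) \<in> F"
    using rtrancl_last_arc \<open>v \<noteq> s\<close> by metis
  have "w = u"
    using F v(1) \<open>v \<noteq> s\<close> uv w(2) by (auto simp: out_branching_def)
  moreover have "Restr F (- {v}) \<subseteq> Restr A (- {v})"
    using FA by blast
  with w(1) have "(s, w) \<in> (Restr A (- {v}))\<^sup>*"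
    using rtrancl_mono by blast
  ultimately show False
    using u \<open>v \<noteq> s\<close> not_dominatedI by blast
qed

lemma degenerate_path_step:
  assumes "degenerate_path V A s xs" "Suc i < length xs"
  shows "xs ! Suc i \<in> dominated (xs ! i) - {xs ! i}" "(xs ! i, xs ! Suc i) \<in> A"
    "\<And>z. z \<in> dominated (xs ! i) \<Longrightarrow> (xs ! i, z) \<in> A \<Longrightarrow> z = xs ! Suc i"
proof -
  have "degenerate_node V A s (xs ! i)" "xs ! Suc i \<in> cd_children V A s (xs ! i)"
    using assms by (auto simp: degenerate_path_def)
  then obtain c where "cd_children V A s (xs ! i) = {c}" "c = xs ! Suc i"
    "c \<in> dominated (xs ! i) - {xs ! i}" "(xs ! i, c) \<in> A"
    "\<And>z. z \<in> dominated (xs ! i) \<Longrightarrow> (xs ! i, z) \<in> A \<Longrightarrow> z = c"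
    by (metis degenerate_node_forced_arc singletonD)
  then show "xs ! Suc i \<in> dominated (xs ! i) - {xs ! i}" "(xs ! i, xs ! Suc i) \<in> A"
    "\<And>z. z \<in> dominated (xs ! i) \<Longrightarrow> (xs ! i, z) \<in> A \<Longrightarrow> z = xs ! Suc i"
    by simp_all
qed

lemma degenerate_path_dominated:
  assumes "degenerate_path V A s xs" "i < j" "j < length xs"
  shows "xs ! j \<in> dominated (xs ! i) - {xs ! i}"
  using assms(2,3)
proof (induction j)
  case (Suc j)
  show ?case
  proof (cases "i = j")
    case False
    with Suc have "xs ! j \<in> dominated (xs ! i) - {xs ! i}"
      by simp
    from this degenerate_path_step(1)[OF assms(1) Suc.prems(2)] show ?thesis
      by (rule strictly_dominated_trans)
  qed (use degenerate_path_step(1)[OF assms(1)] Suc.prems in simp)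
qed simp

lemma degenerate_path_descendant_arc:
  assumes path: "degenerate_path V A s xs" and i: "Suc i < length xs"
    and y: "(xs ! i, y) \<in> (cd_child_rel V A s)\<^sup>*"
    and z: "z \<in> cd_bag V A s y" "(xs ! i, z) \<in> A"
  shows "z = xs ! Suc i"
proof -
  have "cd_node V A s (xs ! i)"
    using path i by (auto simp: degenerate_path_def degenerate_node_def)
  with y have "cd_node V A s y" "dominated y \<subseteq> dominated (xs ! i)"
    by (auto dest: cd_descendant_dominated)
  with z(1) have "z \<in> dominated (xs ! i)"
    using cd_bag_subset_dominated by blast
  from this z(2) show ?thesis
    by (rule degenerate_path_step(3)[OF path i])
qed

end

theorem lemma14:
  fixes V :: "'a set" and A :: "('a \<times> 'a) set" and s :: 'a and xs :: "'a list"
  assumes "digraph V A" and "card V \<ge> 2" and "s \<in> V"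
    and "\<forall>v \<in> V. (s, v) \<in> A\<^sup>*"
    and "degenerate_path V A s xs"
  shows "(\<forall>i. Suc i < length xs \<longrightarrow> (xs ! i, xs ! Suc i) \<in> A \<and>
             (\<forall>F. out_branching V A s F \<longrightarrow> (xs ! i, xs ! Suc i) \<in> F))
       \<and> (\<forall>i j. i < j \<and> j < length xs \<and> (xs ! j, xs ! i) \<in> A \<longrightarrow>
             (\<forall>F. out_branching V A s F \<longrightarrow> (xs ! j, xs ! i) \<notin> F))
       \<and> (\<forall>i y z. Suc i < length xs \<and> (xs ! i, y) \<in> (cd_child_rel V A s)\<^sup>* \<and>
             z \<in> cd_bag V A s y \<and> (xs ! i, z) \<in> A \<longrightarrow> z = xs ! Suc i)"
proof -
  interpret rooted_digraph V A s
    using assms(1,3,4) by unfold_locales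
  note path = assms(5)
  show ?thesis
  proof (intro conjI allI impI)
    fix i assume "Suc i < length xs"
    then show "(xs ! i, xs ! Suc i) \<in> A"
      by (rule degenerate_path_step(2)[OF path])
  next
    fix i F assume i: "Suc i < length xs" and F: "out_branching V A s F"
    from F degenerate_path_step(1,3)[OF path i] show "(xs ! i, xs ! Suc i) \<in> F"
      by (rule out_branching_forced_arc)
  next
    fix i j F assume "i < j \<and> j < length xs \<and> (xs ! j, xs ! i) \<in> A" "out_branching V A s F"
    then show "(xs ! j, xs ! i) \<notin> F"
      using degenerate_path_dominated[OF path] out_branching_no_arc_into_dominator by blast
  next
    fix i y z
    assume "Suc i < length xs \<and> (xs ! i, y) \<in> (cd_child_rel V A s)\<^sup>* \<and>
      z \<in> cd_bag V A s y \<and> (xs ! i, z) \<in> A"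
    then show "z = xs ! Suc i"
      using degenerate_path_descendant_arc[OF path] by blast
  qed
qed

end
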